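(* Let $\kappa$ be an infinite cardinal and let $(\mathbf{Z}_\kappa,\Sigma)$ be a ring of Euclidean integers for $\kappa$. Then there exist a fine ultrafilter $\mathcal{U}$ on $\kappa$ and an isomorphism of ordered rings $\sigma:\mathbf{Z}_\kappa\to\mathbb{Z}^\kappa/\mathcal{U}$ (the ultrapower of $\mathbb{Z}$ modulo $\mathcal{U}$) such that $\sigma(\Sigma(\mathbf{x}))=[\mathbf{f}_{\mathbf{x}}]_{\mathcal{U}}$ for every $\mathbf{x}\in\mathbb{Z}^\kappa$, where $[\cdot]_{\mathcal U}$ denotes the class modulo $\mathcal U$. Equivalently, $\Sigma(\mathbf{x})\le\Sigma(\mathbf{y})$ iff $\{\delta<\kappa\mid \mathbf{f}_{\mathbf{x}}(\delta)\le\mathbf{f}_{\mathbf{y}}(\delta)\}\in\mathcal{U}$.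
   Context: Every ordinal $\alpha$ has a unique base-2 normal form $\alpha=2^{\alpha_1}+\dots+2^{\alpha_n}$ with $\alpha_1>\dots>\alpha_n$; put $L_\alpha=\{\alpha_1,\dots,\alpha_n\}$. Formal inclusion: $\alpha\sqsubseteq\beta$ iff $L_\alpha\subseteq L_\beta$, $\alpha\sqsubset\beta$ iff $L_\alpha\subsetneq L_\beta$. $\alpha\vee\beta$ is the ordinal $\gamma$ with $L_\gamma=L_\alpha\cup L_\beta$. For $\theta<\kappa$ the cone is $C(\theta)=\{\alpha<\kappa\mid\theta\sqsubset\alpha\}$; a filter on $\kappa$ is fine if it contains all cones. For $\mathbf{x}\in\mathbb{Z}^\kappa$, $\mathbf{f}_{\mathbf{x}}(\alpha)=\sum_{\beta\sqsubseteq\alpha}x_\beta$. A ring of Euclidean integers for $\kappa$ is a discretely ordered commutative integral domain $\mathbf{Z}_\kappa$ containing $\mathbb{Z}$ as an ordered subring, together with a map $\Sigma:\mathbb{Z}^\kappa\to\mathbf{Z}_\kappa$, written $\Sigma(\mathbf{x})=\sum_\alpha x_\alpha$, such that: (0) if only finitely many $x_\alpha\neq0$ then $\sum_\alpha x_\alpha$ is the ordinary finite sum; (RA) every element of $\mathbf{Z}_\kappa$ is $\sum_\alpha x_\alpha$ for some $\mathbf{x}\in\mathbb{Z}^\kappa$; (LA) $u\sum_\alpha x_\alpha+v\sum_\alpha y_\alpha=\sum_\alpha(ux_\alpha+vy_\alpha)$ for all $u,v\in\mathbb{Z}$, $\mathbf{x},\mathbf{y}\in\mathbb{Z}^\kappa$;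 (CA) if there is $\theta<\kappa$ with $\mathbf{f}_{\mathbf{x}}(\delta)\le\mathbf{f}_{\mathbf{y}}(\delta)$ for all $\delta<\kappa$ with $\theta\sqsubseteq\delta$, then $\sum_\alpha x_\alpha\le\sum_\alpha y_\alpha$; (PA) $(\sum_\alpha x_\alpha)(\sum_\beta y_\beta)=\sum_\gamma z_\gamma$ where $z_\gamma=\sum_{\alpha\vee\beta=\gamma}x_\alpha y_\beta$. *)

theory Defs
  imports Main "HOL-Library.FSet"
begin

text \<open>Indices: an ordinal \<alpha> below the infinite cardinal \<kappa> is represented by its
  finite exponent set L_\<alpha> (base-2 normal form), i.e. by an element of 'a fset,
  where the infinite type 'a has cardinality \<kappa>.  Formal inclusion is fset inclusion,
  \<alpha> \<or> \<beta> is fset union.\<close>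

definition fsum :: "('a fset \<Rightarrow> int) \<Rightarrow> 'a fset \<Rightarrow> int" where
  "fsum x \<alpha> = (\<Sum>\<beta>\<in>{\<beta>. \<beta> |\<subseteq>| \<alpha>}. x \<beta>)"

definition conv_prod :: "('a fset \<Rightarrow> int) \<Rightarrow> ('a fset \<Rightarrow> int) \<Rightarrow> 'a fset \<Rightarrow> int" where
  "conv_prod x y \<gamma> = (\<Sum>p\<in>{(\<alpha>,\<beta>). \<alpha> |\<union>| \<beta> = \<gamma>}. x (fst p) * y (snd p))"

definition euclidean_integers :: "(('a fset \<Rightarrow> int) \<Rightarrow> 'z::linordered_idom) \<Rightarrow> bool" where
  "euclidean_integers S \<longleftrightarrow>
     (\<forall>z::'z. \<not> (0 < z \<and> z < 1)) \<and>
     (\<forall>x. finite {\<alpha>. x \<alpha> \<noteq> 0} \<longrightarrow> S x = of_int (\<Sum>\<alpha>\<in>{\<alpha>. x \<alpha> \<noteq> 0}. x \<alpha>)) \<and>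
     surj S \<and>
     (\<forall>u v x y. of_int u * S x + of_int v * S y = S (\<lambda>\<alpha>. u * x \<alpha> + v * y \<alpha>)) \<and>
     (\<forall>x y. (\<exists>\<theta>. \<forall>\<delta>. \<theta> |\<subseteq>| \<delta> \<longrightarrow> fsum x \<delta> \<le> fsum y \<delta>) \<longrightarrow> S x \<le> S y) \<and>
     (\<forall>x y. S x * S y = S (conv_prod x y))"

definition is_ultrafilter :: "'b filter \<Rightarrow> bool" where
  "is_ultrafilter F \<longleftrightarrow> F \<noteq> bot \<and> (\<forall>P. eventually P F \<or> eventually (\<lambda>i. \<not> P i) F)"

definition fine :: "'a fset filter \<Rightarrow> bool" where
  "fine F \<longleftrightarrow> (\<forall>\<theta>. eventually (\<lambda>\<alpha>. \<theta> |\<subset>| \<alpha>) F)"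

definition uequiv :: "'b filter \<Rightarrow> (('b \<Rightarrow> int) \<times> ('b \<Rightarrow> int)) set" where
  "uequiv U = {(f, g). eventually (\<lambda>i. f i = g i) U}"

definition uclass :: "'b filter \<Rightarrow> ('b \<Rightarrow> int) \<Rightarrow> ('b \<Rightarrow> int) set" where
  "uclass U f = uequiv U `` {f}"

definition ultrapower :: "'b filter \<Rightarrow> ('b \<Rightarrow> int) set set" where
  "ultrapower U = UNIV // uequiv U"

definition up_add :: "'b filter \<Rightarrow> ('b \<Rightarrow> int) set \<Rightarrow> ('b \<Rightarrow> int) set \<Rightarrow> ('b \<Rightarrow> int) set" where
  "up_add U A B = (\<Union>f\<in>A. \<Union>g\<in>B. uclass U (\<lambda>i. f i + g i))"

definition up_mult :: "'b filter \<Rightarrow> ('b \<Rightarrow> int) set \<Rightarrow> ('b \<Rightarrow> int) set \<Rightarrow> ('b \<Rightarrow> int) set" where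
  "up_mult U A B = (\<Union>f\<in>A. \<Union>g\<in>B. uclass U (\<lambda>i. f i * g i))"

definition up_le :: "'b filter \<Rightarrow> ('b \<Rightarrow> int) set \<Rightarrow> ('b \<Rightarrow> int) set \<Rightarrow> bool" where
  "up_le U A B \<longleftrightarrow> (\<exists>f\<in>A. \<exists>g\<in>B. eventually (\<lambda>i. f i \<le> g i) U)"

end

theory Submission imports Defs begin

lemma ultrapower_eq_range_uclass: "ultrapower F = range (uclass F)"
  unfolding ultrapower_def quotient_def uclass_def by auto

locale monotone_ring_hom_int_fun =
  fixes T :: "('b \<Rightarrow> int) \<Rightarrow> 'z::linordered_idom"
  assumes add: "T (\<lambda>i. f i + g i) = T f + T g"
    and mult: "T (\<lambda>i. f i * g i) = T f * T g"
    and one: "T (\<lambda>_. 1) = 1"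
    and mono: "(\<And>i. f i \<le> g i) \<Longrightarrow> T f \<le> T g"
begin

lemma zero: "T (\<lambda>_. 0) = 0"
  using add[of "\<lambda>_. 0" "\<lambda>_. 0"] by simp

lemma diff: "T (\<lambda>i. f i - g i) = T f - T g"
  using add[of "\<lambda>i. f i - g i" g] by simp

lemma T_of_bool_eq_0_or_1: "T (\<lambda>i. of_bool (P i)) = 0 \<or> T (\<lambda>i. of_bool (P i)) = 1"
proof -
  let ?e = "T (\<lambda>i. of_bool (P i))"
  have "?e * ?e = ?e"
    using mult[of "\<lambda>i. of_bool (P i)" "\<lambda>i. of_bool (P i)"] by (simp add: of_bool_conj[symmetric])
  then have "?e * (?e - 1) = 0" by (simp add: algebra_simps)
  then show ?thesis by simp
qed

lemma T_of_bool_not: "T (\<lambda>i. of_bool (\<not> P i)) = 1 - T (\<lambda>i. of_bool (P i))"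
proof -
  have "(\<lambda>i. of_bool (P i) + of_bool (\<not> P i)) = (\<lambda>_. 1 :: int)"
    by auto
  then show ?thesis
    using add[of "\<lambda>i. of_bool (P i)" "\<lambda>i. of_bool (\<not> P i)"] one by (simp add: algebra_simps)
qed

lemma T_of_bool_conj: "T (\<lambda>i. of_bool (P i \<and> Q i)) = T (\<lambda>i. of_bool (P i)) * T (\<lambda>i. of_bool (Q i))"
  using mult[of "\<lambda>i. of_bool (P i)" "\<lambda>i. of_bool (Q i)"] by (simp add: of_bool_conj)

lemma T_of_bool_mono:
  assumes "\<And>i. P i \<Longrightarrow> Q i" and "T (\<lambda>i. of_bool (P i)) = 1"
  shows "T (\<lambda>i. of_bool (Q i)) = 1"
proof -
  have "T (\<lambda>i. of_bool (P i)) \<le> T (\<lambda>i. of_bool (Q i))"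
    by (rule mono) (use assms(1) in auto)
  then show ?thesis
    using T_of_bool_eq_0_or_1[of Q] assms(2) by auto
qed

definition indicator_filter :: "'b filter" where
  "indicator_filter = Abs_filter (\<lambda>P. T (\<lambda>i. of_bool (P i)) = 1)"

lemma eventually_indicator_filter:
  "eventually P indicator_filter \<longleftrightarrow> T (\<lambda>i. of_bool (P i)) = 1"
proof -
  have "is_filter (\<lambda>P. T (\<lambda>i. of_bool (P i)) = 1)"
    by standard (auto simp: one T_of_bool_conj intro: T_of_bool_mono)
  then show ?thesis
    unfolding indicator_filter_def by (rule eventually_Abs_filter)
qed

lemma is_ultrafilter_indicator_filter: "is_ultrafilter indicator_filter"
  unfolding is_ultrafilter_def
proof
  show "indicator_filter \<noteq> bot"
    using eventually_indicator_filter[of "\<lambda>_. False"] zero by auto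
  show "\<forall>P. eventually P indicator_filter \<or> eventually (\<lambda>i. \<not> P i) indicator_filter"
    using T_of_bool_eq_0_or_1 T_of_bool_not by (auto simp: eventually_indicator_filter)
qed

lemma T_restrict:
  assumes "eventually P indicator_filter"
  shows "T (\<lambda>i. if P i then h i else 0) = T h"
proof -
  have "T (\<lambda>i. if P i then h i else 0) = T (\<lambda>i. h i * of_bool (P i))"
    by (rule arg_cong[where f = T]) auto
  also have "\<dots> = T h"
    using assms by (simp add: mult eventually_indicator_filter)
  finally show ?thesis .
qed

lemma T_le_iff: "T f \<le> T g \<longleftrightarrow> eventually (\<lambda>i. f i \<le> g i) indicator_filter"
proof
  assume "eventually (\<lambda>i. f i \<le> g i) indicator_filter"
  then have "T (\<lambda>i. g i - f i) = T (\<lambda>i. if f i \<le> g i then g i - f i else 0)"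
    by (simp add: T_restrict)
  also have "\<dots> \<ge> T (\<lambda>_. 0)"
    by (rule mono) auto
  finally show "T f \<le> T g"
    by (simp add: diff zero)
next
  assume le: "T f \<le> T g"
  show "eventually (\<lambda>i. f i \<le> g i) indicator_filter"
  proof (rule ccontr)
    assume "\<not> ?thesis"
    then have gt: "eventually (\<lambda>i. \<not> f i \<le> g i) indicator_filter"
      using is_ultrafilter_indicator_filter unfolding is_ultrafilter_def by blast
    then have "1 = T (\<lambda>i. of_bool (\<not> f i \<le> g i))"
      by (simp add: eventually_indicator_filter)
    also have "\<dots> \<le> T (\<lambda>i. if \<not> f i \<le> g i then f i - g i else 0)"
      by (rule mono) auto
    also have "\<dots> = T f - T g"
      using gt by (simp add: T_restrict diff)
    finally show False
      using le by simp
  qed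
qed

lemma T_eq_iff: "T f = T g \<longleftrightarrow> eventually (\<lambda>i. f i = g i) indicator_filter"
proof -
  have "T f = T g \<longleftrightarrow>
      eventually (\<lambda>i. f i \<le> g i) indicator_filter \<and> eventually (\<lambda>i. g i \<le> f i) indicator_filter"
    by (auto simp: T_le_iff[symmetric])
  also have "\<dots> \<longleftrightarrow> eventually (\<lambda>i. f i = g i) indicator_filter"
    by (simp add: eventually_conj_iff[symmetric] eq_iff)
  finally show ?thesis .
qed

lemma vimage_T_eq_uclass: "T -` {T f} = uclass indicator_filter f"
  by (auto simp: uclass_def uequiv_def T_eq_iff eq_commute)

context
  assumes surj: "surj T"
begin

lemma bij_betw_vimage_T: "bij_betw (\<lambda>z. T -` {z}) UNIV (ultrapower indicator_filter)"
proof (rule bij_betwI')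
  show "T -` {a} = T -` {b} \<longleftrightarrow> a = b" for a b
  proof
    obtain f where "a = T f"
      using surj by (rule surjE)
    then show "T -` {a} = T -` {b} \<Longrightarrow> a = b" by blast
  qed simp
  show "T -` {a} \<in> ultrapower indicator_filter" for a
  proof -
    obtain f where "a = T f"
      using surj by (rule surjE)
    then show ?thesis
      by (simp add: vimage_T_eq_uclass ultrapower_eq_range_uclass)
  qed
  show "\<exists>a\<in>UNIV. A = T -` {a}" if "A \<in> ultrapower indicator_filter" for A
    using that vimage_T_eq_uclass by (auto simp: ultrapower_eq_range_uclass)
qed

lemma vimage_T_hom:
  assumes hom: "\<And>f g. T (\<lambda>i. op (f i) (g i)) = op' (T f) (T g)"
  shows "T -` {op' a b} =
    (\<Union>f\<in>T -` {a}. \<Union>g\<in>T -` {b}. uclass indicator_filter (\<lambda>i. op (f i) (g i)))"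
proof -
  obtain f0 g0 where "a = T f0" "b = T g0"
    using surj by (metis surjE)
  then show ?thesis
    by (auto simp: vimage_T_eq_uclass[symmetric] hom)
qed

lemma le_iff_up_le_vimage_T: "a \<le> b \<longleftrightarrow> up_le indicator_filter (T -` {a}) (T -` {b})"
proof -
  obtain f0 g0 where "a = T f0" "b = T g0"
    using surj by (metis surjE)
  then show ?thesis
    by (force simp: up_le_def T_le_iff[symmetric])
qed

end

end

lemma finite_fsubsets: "finite {\<beta>. \<beta> |\<subseteq>| \<alpha>}"
proof -
  have "{\<beta>. \<beta> |\<subseteq>| \<alpha>} = fset (fPow \<alpha>)" by auto
  then show ?thesis by simp
qed

lemma finite_pfsubsets: "finite {\<beta>. \<beta> |\<subset>| \<alpha>}"
  by (rule finite_subset[OF _ finite_fsubsets[of \<alpha>]]) auto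

function mobius :: "('a fset \<Rightarrow> int) \<Rightarrow> 'a fset \<Rightarrow> int" where
  "mobius f \<alpha> = f \<alpha> - (\<Sum>\<beta>\<in>{\<beta>. \<beta> |\<subset>| \<alpha>}. mobius f \<beta>)"
  by auto
termination
  by (relation "measure (\<lambda>(f, \<alpha>). fcard \<alpha>)") (auto intro: pfsubset_fcard_mono)

declare mobius.simps[simp del]

lemma fsum_mobius: "fsum (mobius f) = f"
proof
  fix \<alpha> :: "'a fset"
  have "{\<beta>. \<beta> |\<subseteq>| \<alpha>} = insert \<alpha> {\<beta>. \<beta> |\<subset>| \<alpha>}" by auto
  then show "fsum (mobius f) \<alpha> = f \<alpha>"
    unfolding fsum_def using finite_pfsubsets[of \<alpha>] by (simp add: mobius.simps[of f \<alpha>])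
qed

lemma fsum_add: "fsum (\<lambda>\<alpha>. x \<alpha> + y \<alpha>) \<delta> = fsum x \<delta> + fsum y \<delta>"
  by (simp add: fsum_def sum.distrib)

lemma fsum_conv_prod: "fsum (conv_prod x y) \<delta> = fsum x \<delta> * fsum y \<delta>"
proof -
  let ?P = "{\<beta>. \<beta> |\<subseteq>| \<delta>} \<times> {\<beta>. \<beta> |\<subseteq>| \<delta>}"
  have "fsum x \<delta> * fsum y \<delta> = (\<Sum>p\<in>?P. x (fst p) * y (snd p))"
    unfolding fsum_def sum_product sum.cartesian_product by (simp add: case_prod_beta)
  also have "\<dots> = (\<Sum>\<gamma>\<in>{\<beta>. \<beta> |\<subseteq>| \<delta>}.
      \<Sum>p\<in>{p. p \<in> ?P \<and> fst p |\<union>| snd p = \<gamma>}. x (fst p) * y (snd p))"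
    by (rule sum.group[symmetric]) (auto simp: finite_fsubsets)
  also have "\<dots> = fsum (conv_prod x y) \<delta>"
    unfolding fsum_def conv_prod_def
    by (rule sum.cong[OF refl], rule sum.cong) (auto simp: case_prod_beta)
  finally show ?thesis by simp
qed

lemma fsum_unit: "fsum (\<lambda>\<alpha>. of_bool (\<alpha> = {||})) = (\<lambda>_. 1)"
  by (simp add: fun_eq_iff fsum_def of_bool_def sum.delta[OF finite_fsubsets])

lemma
  assumes "euclidean_integers S"
  shows euclidean_integers_finite_sum:
      "finite {\<alpha>. x \<alpha> \<noteq> 0} \<Longrightarrow> S x = of_int (\<Sum>\<alpha>\<in>{\<alpha>. x \<alpha> \<noteq> 0}. x \<alpha>)"
    and euclidean_integers_surj: "surj S"
    and euclidean_integers_linear: "of_int u * S x + of_int v * S y = S (\<lambda>\<alpha>. u * x \<alpha> + v * y \<alpha>)"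
    and euclidean_integers_mono:
      "(\<And>\<delta>. \<theta> |\<subseteq>| \<delta> \<Longrightarrow> fsum x \<delta> \<le> fsum y \<delta>) \<Longrightarrow> S x \<le> S y"
    and euclidean_integers_mult: "S x * S y = S (conv_prod x y)"
  using assms unfolding euclidean_integers_def by (simp_all, blast)

lemma euclidean_integers_cong:
  assumes "euclidean_integers S" and "fsum x = fsum y"
  shows "S x = S y"
  using euclidean_integers_mono[OF assms(1), of "{||}" x y]
    euclidean_integers_mono[OF assms(1), of "{||}" y x] assms(2)
  by simp

lemma euclidean_integers_mobius_fsum:
  assumes "euclidean_integers S"
  shows "S (mobius (fsum x)) = S x"
  by (rule euclidean_integers_cong[OF assms]) (simp add: fsum_mobius)

lemma monotone_ring_hom_int_fun_mobius:
  assumes S: "euclidean_integers S"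
  shows "monotone_ring_hom_int_fun (\<lambda>f. S (mobius f))"
proof
  show "S (mobius (\<lambda>i. f i + g i)) = S (mobius f) + S (mobius g)" for f g
  proof -
    have "S (mobius f) + S (mobius g) = S (\<lambda>\<alpha>. mobius f \<alpha> + mobius g \<alpha>)"
      using euclidean_integers_linear[OF S, of 1 "mobius f" 1 "mobius g"] by simp
    also have "\<dots> = S (mobius (\<lambda>i. f i + g i))"
      by (rule euclidean_integers_cong[OF S]) (simp add: fun_eq_iff fsum_add fsum_mobius)
    finally show ?thesis ..
  qed
  show "S (mobius (\<lambda>i. f i * g i)) = S (mobius f) * S (mobius g)" for f g
  proof -
    have "S (mobius f) * S (mobius g) = S (conv_prod (mobius f) (mobius g))"
      by (rule euclidean_integers_mult[OF S])
    also have "\<dots> = S (mobius (\<lambda>i. f i * g i))"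
      by (rule euclidean_integers_cong[OF S]) (simp add: fun_eq_iff fsum_conv_prod fsum_mobius)
    finally show ?thesis ..
  qed
  show "S (mobius (\<lambda>_. 1)) = 1"
  proof -
    have "S (mobius (\<lambda>_. 1)) = S (\<lambda>\<alpha>. of_bool (\<alpha> = {||}))"
      by (rule euclidean_integers_cong[OF S]) (simp add: fsum_mobius fsum_unit)
    moreover have "{\<alpha>. (of_bool (\<alpha> = {||}) :: int) \<noteq> 0} = {{||}}"
      by auto
    ultimately show ?thesis
      using euclidean_integers_finite_sum[OF S, of "\<lambda>\<alpha>. of_bool (\<alpha> = {||})"] by simp
  qed
  show "S (mobius f) \<le> S (mobius g)" if "\<And>i. f i \<le> g i" for f g
    by (rule euclidean_integers_mono[OF S, of "{||}"]) (simp add: fsum_mobius that)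
qed

lemma fine_indicator_filter_mobius:
  assumes inf: "infinite (UNIV :: 'a set)"
    and S: "euclidean_integers S"
  shows "fine (monotone_ring_hom_int_fun.indicator_filter (\<lambda>f. S (mobius f :: 'a fset \<Rightarrow> int)))"
  unfolding fine_def
proof
  interpret monotone_ring_hom_int_fun "\<lambda>f. S (mobius f)"
    by (rule monotone_ring_hom_int_fun_mobius[OF S])
  fix \<theta> :: "'a fset"
  obtain a where a: "a \<notin> fset \<theta>"
    using ex_new_if_finite[OF inf finite_fset] by blast
  have "\<theta> |\<subset>| \<delta>" if "finsert a \<theta> |\<subseteq>| \<delta>" for \<delta>
    using that a by (metis finsert_fsubset less_le)
  then have "S (mobius (\<lambda>_. 1)) \<le> S (mobius (\<lambda>\<alpha>. of_bool (\<theta> |\<subset>| \<alpha>)))"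
    by (intro euclidean_integers_mono[OF S, of "finsert a \<theta>"]) (simp add: fsum_mobius)
  then have "eventually (\<lambda>\<alpha>. 1 \<le> (of_bool (\<theta> |\<subset>| \<alpha>) :: int)) indicator_filter"
    by (simp add: T_le_iff)
  then show "eventually (\<lambda>\<alpha>. \<theta> |\<subset>| \<alpha>) indicator_filter"
    by (rule eventually_mono) (simp add: of_bool_def split: if_splits)
qed

theorem theorem1p2:
  fixes S :: "('a fset \<Rightarrow> int) \<Rightarrow> 'z::linordered_idom"
  assumes "infinite (UNIV :: 'a set)"
    and "euclidean_integers S"
  shows "\<exists>U \<sigma>. is_ultrafilter U \<and> fine U \<and>
           bij_betw \<sigma> (UNIV :: 'z set) (ultrapower U) \<and>
           (\<forall>a b. \<sigma> (a + b) = up_add U (\<sigma> a) (\<sigma> b)) \<and>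
           (\<forall>a b. \<sigma> (a * b) = up_mult U (\<sigma> a) (\<sigma> b)) \<and>
           (\<forall>a b. a \<le> b \<longleftrightarrow> up_le U (\<sigma> a) (\<sigma> b)) \<and>
           (\<forall>x. \<sigma> (S x) = uclass U (fsum x))"
proof -
  interpret monotone_ring_hom_int_fun "\<lambda>f. S (mobius f)"
    by (rule monotone_ring_hom_int_fun_mobius[OF assms(2)])
  have surj: "surj (\<lambda>f. S (mobius f))"
    using euclidean_integers_surj[OF assms(2)] euclidean_integers_mobius_fsum[OF assms(2)]
    by (metis surj_def)
  show ?thesis
  proof (intro exI[of _ indicator_filter] exI[of _ "\<lambda>z. (\<lambda>f. S (mobius f)) -` {z}"] conjI allI)
    show "is_ultrafilter indicator_filter"
      by (rule is_ultrafilter_indicator_filter)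
    show "fine indicator_filter"
      by (rule fine_indicator_filter_mobius[OF assms])
    show "bij_betw (\<lambda>z. (\<lambda>f. S (mobius f)) -` {z}) UNIV (ultrapower indicator_filter)"
      by (rule bij_betw_vimage_T[OF surj])
    show "(\<lambda>f. S (mobius f)) -` {a + b} =
        up_add indicator_filter ((\<lambda>f. S (mobius f)) -` {a}) ((\<lambda>f. S (mobius f)) -` {b})" for a b
      unfolding up_add_def by (rule vimage_T_hom[where op = "(+)", OF surj add])
    show "(\<lambda>f. S (mobius f)) -` {a * b} =
        up_mult indicator_filter ((\<lambda>f. S (mobius f)) -` {a}) ((\<lambda>f. S (mobius f)) -` {b})" for a b
      unfolding up_mult_def by (rule vimage_T_hom[where op = "(*)", OF surj mult])
    show "a \<le> b \<longleftrightarrow>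
        up_le indicator_filter ((\<lambda>f. S (mobius f)) -` {a}) ((\<lambda>f. S (mobius f)) -` {b})" for a b
      by (rule le_iff_up_le_vimage_T[OF surj])
    show "(\<lambda>f. S (mobius f)) -` {S x} = uclass indicator_filter (fsum x)" for x
      using vimage_T_eq_uclass[of "fsum x"] by (simp add: euclidean_integers_mobius_fsum[OF assms(2)])
  qed
qed

end
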